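(* Let $\mathcal{X},\mathcal{Y}$ be finite sets with $2\le|\mathcal{X}|,|\mathcal{Y}|<\infty$ and $P_{X,Y}$ a joint pmf on $\mathcal{X}\times\mathcal{Y}$ with $P_X(x)>0$ for all $x$ and $P_Y(y)>0$ for all $y$. If $(X_1,Y_1),\dots,(X_n,Y_n)$ are i.i.d. with joint pmf $P_{X,Y}$, then $$\eta_{\chi^2}(P_{X_1^n},P_{Y_1^n|X_1^n})\le\eta_{\mathrm{KL}}(P_{X_1^n},P_{Y_1^n|X_1^n})\le\frac{2\,\eta_{\chi^2}(P_{X_1^n},P_{Y_1^n|X_1^n})}{\phi\!\left(\max_{A\subseteq\mathcal{X}}\pi(A)\right)\min_{x\in\mathcal{X}}P_X(x)},$$ where $\pi(A)=\min\{P_X(A),1-P_X(A)\}$ for $A\subseteq\mathcal{X}$, and $\phi:[0,\tfrac12]\to\mathbb{R}$ is $\phi(p)=\frac{1}{1-2p}\log\frac{1-p}{p}$ for $p\in[0,\tfrac12)$ and $\phi(\tfrac12)=2$.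
   Context: $X_1^n=(X_1,\dots,X_n)$, $Y_1^n=(Y_1,\dots,Y_n)$, $P_X(A)=\sum_{x\in A}P_X(x)$. For a pair of finite-valued random variables $(U,V)$ with channel matrix $W$ of $P_{V|U}$ (column $u$ equal to $P_{V|U=u}$), the contraction coefficient for a divergence $D_\bullet$ is $\eta_\bullet(P_U,P_{V|U})=\sup\{D_\bullet(WR_U\|WP_U)/D_\bullet(R_U\|P_U): R_U \text{ a pmf},\ 0<D_\bullet(R_U\|P_U)<\infty\}$. $\eta_{\mathrm{KL}}$ uses the KL divergence $D(R\|P)=\sum R\log(R/P)$ (natural log) and $\eta_{\chi^2}$ uses $\chi^2(R\|P)=\sum (R-P)^2/P$. *)

theory Defs
  imports Complex_Main
begin

definition is_pmf :: "'a set \<Rightarrow> ('a \<Rightarrow> real) \<Rightarrow> bool" where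
  "is_pmf S R \<longleftrightarrow> (\<forall>u\<in>S. 0 \<le> R u) \<and> sum R S = 1"

text \<open>Absolute continuity R << P on S; for finite S this is exactly the condition
  that D(R||P) (resp. chi^2(R||P)) is finite.\<close>
definition abs_cont :: "'a set \<Rightarrow> ('a \<Rightarrow> real) \<Rightarrow> ('a \<Rightarrow> real) \<Rightarrow> bool" where
  "abs_cont S R P \<longleftrightarrow> (\<forall>u\<in>S. P u = 0 \<longrightarrow> R u = 0)"

text \<open>KL divergence (natural log, convention 0 log 0 = 0), meaningful when abs_cont holds.\<close>
definition kl_div :: "'a set \<Rightarrow> ('a \<Rightarrow> real) \<Rightarrow> ('a \<Rightarrow> real) \<Rightarrow> real" where
  "kl_div S R P = (\<Sum>u\<in>S. if R u = 0 then 0 else R u * ln (R u / P u))"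

text \<open>chi^2 divergence, meaningful when abs_cont holds (terms with P u = 0 then vanish).\<close>
definition chi2_div :: "'a set \<Rightarrow> ('a \<Rightarrow> real) \<Rightarrow> ('a \<Rightarrow> real) \<Rightarrow> real" where
  "chi2_div S R P = (\<Sum>u\<in>S. (R u - P u)\<^sup>2 / P u)"

text \<open>Output distribution W R of channel W (W u v = P(V=v | U=u)) with input pmf R on S.\<close>
definition chan_out :: "'a set \<Rightarrow> ('a \<Rightarrow> 'b \<Rightarrow> real) \<Rightarrow> ('a \<Rightarrow> real) \<Rightarrow> 'b \<Rightarrow> real" where
  "chan_out S W R v = (\<Sum>u\<in>S. W u v * R u)"

definition eta_KL :: "'a set \<Rightarrow> 'b set \<Rightarrow> ('a \<Rightarrow> real) \<Rightarrow> ('a \<Rightarrow> 'b \<Rightarrow> real) \<Rightarrow> real" where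
  "eta_KL S T P W = Sup {kl_div T (chan_out S W R) (chan_out S W P) / kl_div S R P | R.
      is_pmf S R \<and> abs_cont S R P \<and> 0 < kl_div S R P}"

definition eta_chi2 :: "'a set \<Rightarrow> 'b set \<Rightarrow> ('a \<Rightarrow> real) \<Rightarrow> ('a \<Rightarrow> 'b \<Rightarrow> real) \<Rightarrow> real" where
  "eta_chi2 S T P W = Sup {chi2_div T (chan_out S W R) (chan_out S W P) / chi2_div S R P | R.
      is_pmf S R \<and> abs_cont S R P \<and> 0 < chi2_div S R P}"

definition margX :: "('x \<Rightarrow> 'y::finite \<Rightarrow> real) \<Rightarrow> 'x \<Rightarrow> real" where
  "margX PXY x = (\<Sum>y\<in>UNIV. PXY x y)"

definition margY :: "('x::finite \<Rightarrow> 'y \<Rightarrow> real) \<Rightarrow> 'y \<Rightarrow> real" where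
  "margY PXY y = (\<Sum>x\<in>UNIV. PXY x y)"

text \<open>Sequences of length n: X_1^n is represented by a list of length n.\<close>
definition seqs :: "nat \<Rightarrow> 'a list set" where
  "seqs n = {xs. length xs = n}"

definition iid_input :: "('x \<Rightarrow> 'y::finite \<Rightarrow> real) \<Rightarrow> 'x list \<Rightarrow> real" where
  "iid_input PXY xs = (\<Prod>i<length xs. margX PXY (xs ! i))"

definition iid_channel :: "('x \<Rightarrow> 'y::finite \<Rightarrow> real) \<Rightarrow> 'x list \<Rightarrow> 'y list \<Rightarrow> real" where
  "iid_channel PXY xs ys = (\<Prod>i<length xs. PXY (xs ! i) (ys ! i) / margX PXY (xs ! i))"

definition pi_set :: "('x \<Rightarrow> real) \<Rightarrow> 'x set \<Rightarrow> real" where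
  "pi_set PX A = min (sum PX A) (1 - sum PX A)"

definition phi :: "real \<Rightarrow> real" where
  "phi p = (if p = 1/2 then 2 else (1 / (1 - 2*p)) * ln ((1 - p) / p))"

end

(*
  The lower bound holds for every channel: perturbing the input distribution P towards R by t,
  both KL divergences behave like t^2/2 times the corresponding chi-square divergences.

  For the upper bound, a single letter satisfies
    D(WR || WP) <= chi^2(WR || WP) <= eta chi^2(R || P) <= eta |R - P|^2 / min P_X
               <= 2 eta D(R || P) / (phi(max pi) min P_X),
  the last step by Ordentlich and Weinberger's refined Pinsker inequality, where eta is the
  n-letter chi-square coefficient (the input R x P_X^(n-1) shows that it dominates the
  single-letter one). Strong data processing inequalities for KL divergence tensorize by the
  chain rule, so the same constant bounds the n-letter KL coefficient.
*)

theory Submission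
  imports Defs "HOL-Analysis.Analysis" "HOL-Real_Asymp.Real_Asymp"
begin

section \<open>The function phi and a binary Pinsker inequality\<close>

lemma nonneg_by_derivative_sign:
  fixes g g' :: "real \<Rightarrow> real"
  assumes deriv: "\<And>x. x \<in> {a..b} \<Longrightarrow> (g has_real_derivative g' x) (at x)"
    and c: "c \<in> {a..b}" "g c = 0"
    and left: "\<And>x. x \<in> {a..c} \<Longrightarrow> g' x \<le> 0" and right: "\<And>x. x \<in> {c..b} \<Longrightarrow> 0 \<le> g' x"
    and q: "q \<in> {a..b}"
  shows "0 \<le> g q"
proof (cases "q \<le> c")
  case True
  have "g c \<le> g q"
    by (rule deriv_nonpos_imp_antimono[where g'=g']) (use True c q in \<open>auto intro: deriv left\<close>)
  then show ?thesis using c by simp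
next
  case False
  have "g c \<le> g q"
    by (rule deriv_nonneg_imp_mono[where g'=g']) (use False c q in \<open>auto intro: deriv right\<close>)
  then show ?thesis using c by simp
qed

lemma convex_on_ln_ratio: "convex_on {0..<1} (\<lambda>x::real. ln (1 + x) - ln (1 - x))"
proof (rule f''_ge0_imp_convex[where f'="\<lambda>x. 1/(1+x) + 1/(1-x)"
    and f''="\<lambda>x. -1/(1+x)^2 + 1/(1-x)^2"])
  fix x :: real assume x: "x \<in> {0..<1}"
  show "((\<lambda>x. ln (1+x) - ln (1-x)) has_real_derivative 1/(1+x) + 1/(1-x)) (at x)"
    using x by (auto intro!: derivative_eq_intros simp: field_simps)
  show "((\<lambda>x. 1/(1+x) + 1/(1-x)) has_real_derivative -1/(1+x)^2 + 1/(1-x)^2) (at x)"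
    using x by (auto intro!: derivative_eq_intros simp: field_simps power2_eq_square)
  have "(1-x)^2 \<le> (1+x)^2" using x by (simp add: power2_eq_square algebra_simps)
  moreover have "0 < (1-x)^2" using x by simp
  ultimately have "1/(1+x)^2 \<le> 1/(1-x)^2" by (simp add: frac_le)
  then show "0 \<le> -1/(1+x)^2 + 1/(1-x)^2" by simp
qed simp

lemma ln_ratio_ge:
  fixes x :: real assumes "0 \<le> x" "x < 1"
  shows "2 * x \<le> ln (1 + x) - ln (1 - x)"
proof -
  have "(\<lambda>t. ln (1+t) - ln (1-t) - 2*t) 0 \<le> (\<lambda>t. ln (1+t) - ln (1-t) - 2*t) x"
  proof (rule deriv_nonneg_imp_mono[where g="\<lambda>t. ln (1+t) - ln (1-t) - 2*t"
      and g'="\<lambda>t. 1/(1+t) + 1/(1-t) - 2"])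
    fix t assume t: "t \<in> {0..x}"
    then have "t * t \<le> t * 1" using assms by (intro mult_left_mono) auto
    then have t1: "0 < 1 - t^2" "1 - t^2 \<le> 1" using t assms by (auto simp: power2_eq_square)
    show "((\<lambda>t. ln (1+t) - ln (1-t) - 2*t) has_real_derivative 1/(1+t) + 1/(1-t) - 2) (at t)"
      using t assms by (auto intro!: derivative_eq_intros simp: divide_simps)
    have "1/(1+t) + 1/(1-t) = 2/(1-t^2)"
      using t assms by (simp add: field_simps power2_eq_square)
    moreover have "2 \<le> 2/(1-t^2)" using t1 by (simp add: le_divide_eq)
    ultimately show "0 \<le> 1/(1+t) + 1/(1-t) - 2" by simp
  qed (use assms in auto)
  then show ?thesis by simp
qed

lemma phi_eq_ln_ratio:
  assumes "0 < p" "p < 1/2"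
  shows "phi p = (ln (1 + (1 - 2*p)) - ln (1 - (1 - 2*p))) / (1 - 2*p)"
proof -
  have "ln ((1-p)/p) = ln (2*(1-p)) - ln (2*p)"
    using assms ln_mult[of 2 "1-p"] ln_mult[of 2 p] by (simp add: ln_div)
  then show ?thesis using assms unfolding phi_def by (simp add: algebra_simps)
qed

text \<open>Writing \<open>x = 1 - 2p\<close>, phi p is the slope of the chord of the convex function
  \<open>ln (1 + x) - ln (1 - x)\<close> from the origin.\<close>
lemma phi_antimono:
  assumes "0 < a" "a \<le> b" "b \<le> 1/2"
  shows "phi b \<le> phi a"
proof (cases "b = 1/2")
  case True
  show ?thesis
  proof (cases "a = 1/2")
    case False
    with assms have a: "a < 1/2" by simp
    have "2 * (1 - 2*a) \<le> ln (1 + (1 - 2*a)) - ln (1 - (1 - 2*a))"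
      using ln_ratio_ge[of "1 - 2*a"] assms by simp
    then show ?thesis using phi_eq_ln_ratio[of a] a assms True
      by (simp add: phi_def field_simps)
  next
    case True
    with \<open>b = 1/2\<close> have "a = b" by simp
    then show ?thesis by simp
  qed
next
  case False
  with assms have b: "b < 1/2" by simp
  define x y where "x = 1 - 2*a" and "y = 1 - 2*b"
  have xy: "0 < y" "y \<le> x" "x < 1" using assms b by (auto simp: x_def y_def)
  let ?G = "\<lambda>x::real. ln (1 + x) - ln (1 - x)"
  have "?G ((1 - y/x) *\<^sub>R 0 + (y/x) *\<^sub>R x) \<le> (1 - y/x) * ?G 0 + (y/x) * ?G x"
    by (rule convex_onD[OF convex_on_ln_ratio]) (use xy in \<open>auto simp: field_simps\<close>)
  then have "?G y / y \<le> ?G x / x" using xy by (simp add: field_simps)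
  then show ?thesis using phi_eq_ln_ratio[of a] phi_eq_ln_ratio[of b] assms b
    by (simp add: x_def y_def)
qed

lemma phi_ge_two: "0 < p \<Longrightarrow> p \<le> 1/2 \<Longrightarrow> 2 \<le> phi p"
  using phi_antimono[of p "1/2"] by (simp add: phi_def)

definition logit :: "real \<Rightarrow> real" where
  "logit q = ln q - ln (1 - q)"

definition pinsker_gap :: "real \<Rightarrow> real \<Rightarrow> real \<Rightarrow> real" where
  "pinsker_gap p c q = q * (ln q - ln p) + (1 - q) * (ln (1 - q) - ln (1 - p)) - c * (q - p)^2"

lemma pinsker_gap_deriv:
  assumes "0 < q" "q < 1"
  shows "(pinsker_gap p c has_real_derivative logit q - logit p - 2 * c * (q - p)) (at q)"
proof -
  have "((\<lambda>q. q * (ln q - ln p) + (1 - q) * (ln (1 - q) - ln (1 - p)) - c * (q - p)^2)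
      has_real_derivative (ln q - ln p) + q * (1/q) - (ln (1 - q) - ln (1 - p))
        + (1 - q) * (- 1/(1 - q)) - c * (2 * (q - p))) (at q)"
    using assms by (auto intro!: derivative_eq_intros)
  then show ?thesis using assms by (simp add: pinsker_gap_def[abs_def] logit_def field_simps)
qed

lemma pinsker_gap_self: "pinsker_gap p c p = 0"
  by (simp add: pinsker_gap_def)

lemma pinsker_gap_phi_one_minus:
  assumes "0 < p" "p < 1/2"
  shows "pinsker_gap p (phi p) (1 - p) = 0"
proof -
  have "ln ((1-p)/p) = ln (1-p) - ln p" using assms by (simp add: ln_div)
  then have "pinsker_gap p (phi p) (1-p)
      = (1-p) * (ln (1-p) - ln p) + p * (ln p - ln (1-p))
        - (ln (1-p) - ln p) / (1 - 2*p) * (1 - 2*p)^2"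
    using assms by (simp add: pinsker_gap_def phi_def)
  also have "\<dots> = 0" using assms by (simp add: field_simps power2_eq_square)
  finally show ?thesis .
qed

lemma logit_one_minus: "0 < q \<Longrightarrow> q < 1 \<Longrightarrow> logit (1 - q) = - logit q"
  by (simp add: logit_def)

lemma concave_on_logit:
  assumes "0 < a" "b \<le> 1/2"
  shows "concave_on {a..b} logit"
proof (rule f''_le0_imp_concave[where f'="\<lambda>x. 1/x + 1/(1-x)" and f''="\<lambda>x. -1/x^2 + 1/(1-x)^2"])
  fix x :: real assume "x \<in> {a..b}"
  then have x: "0 < x" "x \<le> 1/2" using assms by auto
  show "(logit has_real_derivative 1/x + 1/(1-x)) (at x)"
    unfolding logit_def[abs_def] using x by (auto intro!: derivative_eq_intros simp: divide_simps)
  show "((\<lambda>x. 1/x + 1/(1-x)) has_real_derivative -1/x^2 + 1/(1-x)^2) (at x)"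
    using x by (auto intro!: derivative_eq_intros simp: field_simps power2_eq_square)
  have "x^2 \<le> (1-x)^2" "0 < x^2" using x by (auto simp: power2_eq_square algebra_simps)
  then have "1/(1-x)^2 \<le> 1/x^2" by (simp add: frac_le)
  then show "-1/x^2 + 1/(1-x)^2 \<le> 0" by simp
qed simp

lemma logit_half: "logit (1/2) = 0"
  by (simp add: logit_def)

lemma phi_eq_logit_slope: "0 < p \<Longrightarrow> p < 1/2 \<Longrightarrow> 2 * phi p = (logit (1/2) - logit p) / (1/2 - p)"
  by (simp add: phi_def logit_def ln_div field_simps)

text \<open>Concavity of logit on \<open>(0, 1/2]\<close> against its chord from p to 1/2, whose slope is
  \<open>2 phi p\<close>, gives the sign of the derivative of \<open>pinsker_gap p (phi p)\<close> on \<open>(0, 1/2]\<close>.\<close>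
lemma logit_above_chord:
  assumes "0 < p" "p < 1/2" "p \<le> q" "q \<le> 1/2"
  shows "0 \<le> logit q - logit p - 2 * phi p * (q - p)"
proof -
  have "(logit (1/2) - logit p) / (1/2 - p) * (q - p) + logit p \<le> logit q"
    using concave_onD_Icc'[OF concave_on_logit[of p "1/2"], of q] assms by simp
  then show ?thesis using phi_eq_logit_slope[OF assms(1,2)] by (simp add: algebra_simps)
qed

lemma logit_below_chord:
  assumes "0 < p" "p < 1/2" "0 < q" "q \<le> p"
  shows "logit q - logit p - 2 * phi p * (q - p) \<le> 0"
proof -
  have "(logit (1/2) - logit q) / (1/2 - q) * (p - q) + logit q \<le> logit p"
    using concave_onD_Icc'[OF concave_on_logit[of q "1/2"], of p] assms by simp
  then have "logit q * (1/2 - p) \<le> logit p * (1/2 - q)"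
    using assms by (simp add: logit_half field_simps)
  then have "logit q \<le> logit p * (1/2 - q) / (1/2 - p)" using assms by (simp add: field_simps)
  have "2 * phi p = - logit p / (1/2 - p)"
    using phi_eq_logit_slope[OF assms(1,2)] by (simp add: logit_half)
  then have "logit p + 2 * phi p * (q - p) = logit p + (- logit p / (1/2 - p)) * (q - p)"
    by simp
  also have "\<dots> = logit p * (1/2 - q) / (1/2 - p)"
    using assms by (simp add: field_simps)
  finally show ?thesis using \<open>logit q \<le> logit p * (1/2 - q) / (1/2 - p)\<close> by simp
qed

lemma logit_chord_one_minus:
  assumes "0 < p" "p < 1/2" "0 < x" "x < 1"
  shows "logit x - logit p - 2 * phi p * (x - p)
    = - (logit (1-x) - logit p - 2 * phi p * ((1-x) - p))"
proof -
  have "2 * phi p * (1/2 - p) = - logit p"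
    using phi_eq_logit_slope[OF assms(1,2)] assms by (simp add: logit_half field_simps)
  then show ?thesis using logit_one_minus[of x] assms by (simp add: algebra_simps)
qed

text \<open>For \<open>p < 1/2\<close> the gap has two zeros, at p and at \<open>1 - p\<close>, and is decreasing to the left
  and increasing to the right of each of them within its half of \<open>(0, 1)\<close>.\<close>
lemma pinsker_gap_phi_nonneg:
  assumes "0 < p" "p < 1/2" "0 < q" "q < 1"
  shows "0 \<le> pinsker_gap p (phi p) q"
proof -
  let ?D = "\<lambda>x. logit x - logit p - 2 * phi p * (x - p)"
  have deriv: "(pinsker_gap p (phi p) has_real_derivative ?D x) (at x)" if "0 < x" "x < 1" for x
    using pinsker_gap_deriv that by blast
  show ?thesis
  proof (cases "q \<le> 1/2")
    case True
    show ?thesis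
    proof (rule nonneg_by_derivative_sign[where g="pinsker_gap p (phi p)" and q=q
        and a="min q p" and b="1/2" and c=p])
      show "pinsker_gap p (phi p) p = 0" by (rule pinsker_gap_self)
    qed (use assms True in \<open>auto intro: deriv logit_above_chord logit_below_chord\<close>)
  next
    case False
    show ?thesis
    proof (rule nonneg_by_derivative_sign[where g="pinsker_gap p (phi p)" and q=q
        and a="1/2" and b="max q (1-p)" and c="1-p"])
      show "pinsker_gap p (phi p) (1-p) = 0" by (rule pinsker_gap_phi_one_minus[OF assms(1,2)])
      fix x assume x: "x \<in> {1/2..1-p}"
      have "0 \<le> ?D (1-x)" using x assms by (intro logit_above_chord) auto
      then show "?D x \<le> 0" using logit_chord_one_minus[of p x] x assms by simp
    next
      fix x assume x: "x \<in> {1-p..max q (1-p)}"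
      moreover have "max q (1-p) < 1" using assms by simp
      ultimately have "x < 1" by (meson atLeastAtMost_iff le_less_trans)
      have "?D (1-x) \<le> 0" using x assms False by (intro logit_below_chord) auto
      then show "0 \<le> ?D x" using logit_chord_one_minus[of p x] \<open>x < 1\<close> x assms by simp
    qed (use assms False in \<open>auto intro: deriv\<close>)
  qed
qed

lemma pinsker_gap_half_nonneg:
  assumes "0 < q" "q < 1"
  shows "0 \<le> pinsker_gap (1/2) 2 q"
proof -
  let ?D = "\<lambda>x. logit x - logit (1/2) - 2 * 2 * (x - 1/2)"
  have D_mono: "?D a \<le> ?D b" if "0 < a" "a \<le> b" "b < 1" for a b
  proof (rule deriv_nonneg_imp_mono[where g="?D" and g'="\<lambda>x. 1/x + 1/(1-x) - 4"])
    fix x assume "x \<in> {a..b}"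
    then have x: "0 < x" "x < 1" using that by auto
    show "(?D has_real_derivative 1/x + 1/(1-x) - 4) (at x)"
      unfolding logit_def using x by (auto intro!: derivative_eq_intros simp: divide_simps)
    have "x * (1-x) \<le> 1/4"
      using zero_le_power2[of "x - 1/2"] by (simp add: power2_eq_square algebra_simps)
    moreover have "1/x + 1/(1-x) = 1/(x * (1-x))" using x by (simp add: field_simps)
    ultimately show "0 \<le> 1/x + 1/(1-x) - 4" using x by (simp add: field_simps)
  qed (use that in auto)
  show ?thesis
  proof (rule nonneg_by_derivative_sign[where g="pinsker_gap (1/2) 2" and q=q
      and a="min q (1/2)" and b="max q (1/2)" and c="1/2"])
    show "pinsker_gap (1/2) 2 (1/2) = 0" by (rule pinsker_gap_self)
  qed (use assms D_mono[of _ "1/2"] D_mono[of "1/2"] in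
      \<open>auto intro: pinsker_gap_deriv simp: logit_half\<close>)
qed

lemma pinsker_gap_nonneg_interior:
  assumes "0 < p" "p \<le> 1/2" "0 < q" "q < 1"
  shows "0 \<le> pinsker_gap p (phi p) q"
proof (cases "p = 1/2")
  case True
  then show ?thesis
    using pinsker_gap_half_nonneg[OF assms(3,4)] unfolding True by (simp add: phi_def)
qed (use pinsker_gap_phi_nonneg assms in simp)

text \<open>At the end points the gap is a one-sided limit, because \<open>ln 0 = 0\<close> makes
  \<open>pinsker_gap p c\<close> continuous on \<open>[0, 1]\<close>.\<close>
lemma pinsker_gap_nonneg:
  assumes "0 < p" "p \<le> 1/2" "0 \<le> q" "q \<le> 1"
  shows "0 \<le> pinsker_gap p (phi p) q"
proof -
  have inside: "\<forall>\<^sub>F x in F. 0 \<le> pinsker_gap p (phi p) x"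
    if "\<forall>\<^sub>F x in F. x \<in> {0<..<1}" for F
    using that by eventually_elim (use pinsker_gap_nonneg_interior assms in auto)
  consider "q = 0" | "q = 1" | "0 < q" "q < 1" using assms by linarith
  then show ?thesis
  proof cases
    case 1
    have "(pinsker_gap p (phi p) \<longlongrightarrow> - ln (1 - p) - phi p * p^2) (at_right 0)"
      unfolding pinsker_gap_def[abs_def] using assms by real_asymp
    then have "0 \<le> - ln (1 - p) - phi p * p^2"
      by (rule tendsto_lowerbound[OF _ inside[OF eventually_at_right_real]]) simp_all
    then show ?thesis using 1 by (simp add: pinsker_gap_def)
  next
    case 2
    have "(pinsker_gap p (phi p) \<longlongrightarrow> - ln p - phi p * (1 - p)^2) (at_left 1)"
      unfolding pinsker_gap_def[abs_def] using assms by real_asymp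
    then have "0 \<le> - ln p - phi p * (1 - p)^2"
      by (rule tendsto_lowerbound[OF _ inside[OF eventually_at_left_real]]) simp_all
    then show ?thesis using 2 by (simp add: pinsker_gap_def)
  qed (use pinsker_gap_nonneg_interior assms in auto)
qed

section \<open>Relative entropy terms and the refined Pinsker inequality\<close>

definition kl_term :: "real \<Rightarrow> real \<Rightarrow> real" where
  "kl_term x y = (if x = 0 then 0 else x * ln (x / y))"

lemma kl_div_eq_sum_kl_term: "kl_div S R P = (\<Sum>u\<in>S. kl_term (R u) (P u))"
  by (simp add: kl_div_def kl_term_def)

lemma kl_term_self [simp]: "kl_term x x = 0"
  by (simp add: kl_term_def)

lemma kl_term_scale: "0 \<le> t \<Longrightarrow> kl_term (t * x) (t * y) = t * kl_term x y"
  by (cases "t = 0") (auto simp: kl_term_def)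

lemma binary_kl_ge_phi:
  assumes "0 < p" "p \<le> 1/2" "0 \<le> q" "q \<le> 1"
  shows "phi p * (q - p)^2 \<le> kl_term q p + kl_term (1 - q) (1 - p)"
proof -
  have "kl_term q p + kl_term (1 - q) (1 - p) - phi p * (q - p)^2 = pinsker_gap p (phi p) q"
    using assms by (auto simp: kl_term_def pinsker_gap_def ln_div)
  then show ?thesis using pinsker_gap_nonneg[OF assms] by simp
qed

lemma binary_kl_ge_phi_min:
  assumes "0 < p" "p < 1" "0 \<le> q" "q \<le> 1"
  shows "phi (min p (1 - p)) * (q - p)^2 \<le> kl_term q p + kl_term (1 - q) (1 - p)"
proof (cases "p \<le> 1/2")
  case True
  then show ?thesis using binary_kl_ge_phi[of p q] assms by simp
next
  case False
  then have "phi (1 - p) * ((1 - q) - (1 - p))^2 \<le> kl_term (1 - q) (1 - p) + kl_term q p"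
    using binary_kl_ge_phi[of "1 - p" "1 - q"] assms by simp
  then show ?thesis using False by (simp add: power2_commute)
qed

text \<open>The one-term tangent bound behind the log-sum inequality: \<open>ln t \<ge> 1 - 1/t\<close> at
  \<open>t = (x/y) / (X/Y)\<close>.\<close>
lemma kl_term_ge_tangent:
  assumes "0 < X" "0 < Y" "0 \<le> x" "0 \<le> y" "y = 0 \<longrightarrow> x = 0"
  shows "x * ln (X / Y) + x - y * X / Y \<le> kl_term x y"
proof (cases "x = 0")
  case True
  then show ?thesis using assms by (simp add: kl_term_def)
next
  case False
  then have x: "0 < x" and y: "0 < y" using assms by auto
  define z where "z = (x * Y) / (y * X)"
  have z: "0 < z" using x y assms by (simp add: z_def)
  have "ln (1/z) \<le> 1/z - 1" using z by (intro ln_le_minus_one) simp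
  then have "1 - (y * X) / (x * Y) \<le> ln (x / y) - ln (X / Y)"
    using x y z assms by (simp add: z_def ln_div ln_mult)
  then have "x * (1 - (y * X) / (x * Y)) \<le> x * (ln (x / y) - ln (X / Y))"
    using x by (simp add: mult_left_mono)
  moreover have "x * (1 - (y * X) / (x * Y)) = x - y * X / Y"
    using x assms by (simp add: field_simps)
  ultimately show ?thesis using False by (simp add: kl_term_def algebra_simps)
qed

lemma log_sum_inequality:
  assumes "finite I" "\<And>i. i \<in> I \<Longrightarrow> 0 \<le> x i" "\<And>i. i \<in> I \<Longrightarrow> 0 \<le> y i"
    "\<And>i. i \<in> I \<Longrightarrow> y i = 0 \<Longrightarrow> x i = 0"
  shows "kl_term (sum x I) (sum y I) \<le> (\<Sum>i\<in>I. kl_term (x i) (y i))"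
proof (cases "sum x I = 0")
  case True
  then have "\<forall>i\<in>I. x i = 0" using sum_nonneg_eq_0_iff[OF assms(1,2)] by simp
  then show ?thesis using True by (simp add: kl_term_def)
next
  case False
  then have X: "0 < sum x I" using sum_nonneg[of I x] assms(2) by simp
  obtain i where i: "i \<in> I" "x i \<noteq> 0" using False by (rule sum.not_neutral_contains_not_neutral)
  then have "0 < y i" using assms(3)[OF i(1)] assms(4)[OF i(1)] by force
  moreover have "y i \<le> sum y I" using i(1) assms(1,3) by (intro member_le_sum) auto
  ultimately have Y: "0 < sum y I" by simp
  have "(\<Sum>i\<in>I. x i * ln (sum x I / sum y I) + x i - y i * sum x I / sum y I)
      \<le> (\<Sum>i\<in>I. kl_term (x i) (y i))"
    by (intro sum_mono kl_term_ge_tangent X Y) (use assms in auto)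
  moreover have "(\<Sum>i\<in>I. x i * ln (sum x I / sum y I) + x i - y i * sum x I / sum y I)
      = sum x I * ln (sum x I / sum y I)"
    using Y by (simp add: sum.distrib sum_subtractf sum_distrib_right[symmetric]
        sum_divide_distrib[symmetric])
  ultimately show ?thesis using False by (simp add: kl_term_def)
qed

lemma log_sum_inequality_pos:
  assumes "finite I" "\<And>i. i \<in> I \<Longrightarrow> 0 \<le> x i" "\<And>i. i \<in> I \<Longrightarrow> 0 < y i"
  shows "kl_term (sum x I) (sum y I) \<le> (\<Sum>i\<in>I. kl_term (x i) (y i))"
  by (rule log_sum_inequality) (use assms in \<open>fastforce intro: less_imp_le\<close>)+

lemma kl_div_nonneg:
  assumes "finite S" "\<And>u. u \<in> S \<Longrightarrow> 0 < P u" "\<And>u. u \<in> S \<Longrightarrow> 0 \<le> R u" "sum R S = sum P S"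
  shows "0 \<le> kl_div S R P"
  using log_sum_inequality_pos[of S R P] assms by (simp add: kl_div_eq_sum_kl_term)

text \<open>Data processing for the map that only records whether \<open>u \<in> A\<close>.\<close>
lemma kl_div_ge_binary:
  assumes S: "finite S" "A \<subseteq> S"
    and P: "\<And>u. u \<in> S \<Longrightarrow> 0 < P u" and R: "\<And>u. u \<in> S \<Longrightarrow> 0 \<le> R u"
  shows "kl_term (sum R A) (sum P A) + kl_term (sum R (S - A)) (sum P (S - A)) \<le> kl_div S R P"
proof -
  have "finite A" using S finite_subset by blast
  then have "kl_term (sum R A) (sum P A) \<le> (\<Sum>u\<in>A. kl_term (R u) (P u))"
    using S by (intro log_sum_inequality_pos) (auto intro: P R)
  moreover have "kl_term (sum R (S - A)) (sum P (S - A)) \<le> (\<Sum>u\<in>S - A. kl_term (R u) (P u))"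
    using S by (intro log_sum_inequality_pos) (auto intro: P R)
  ultimately show ?thesis
    using sum.subset_diff[OF S(2,1), of "\<lambda>u. kl_term (R u) (P u)"]
    by (simp add: kl_div_eq_sum_kl_term)
qed

lemma sum_squares_le_square_sum:
  fixes f :: "'a \<Rightarrow> real"
  assumes "finite A" "\<And>i. i \<in> A \<Longrightarrow> 0 \<le> f i"
  shows "(\<Sum>i\<in>A. (f i)^2) \<le> (sum f A)^2"
proof -
  have "(\<Sum>i\<in>A. (f i)^2) \<le> (\<Sum>i\<in>A. f i * sum f A)"
  proof (rule sum_mono)
    fix i assume i: "i \<in> A"
    have "f i \<le> sum f A" using assms i by (intro member_le_sum) auto
    then show "(f i)^2 \<le> f i * sum f A" using assms i by (simp add: power2_eq_square mult_left_mono)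
  qed
  also have "\<dots> = (sum f A)^2" by (simp add: sum_distrib_right[symmetric] power2_eq_square)
  finally show ?thesis .
qed

lemma sum_squares_diff_le:
  fixes R P :: "'a \<Rightarrow> real"
  assumes S: "finite S" and eq: "sum R S = sum P S" and A: "A = {u \<in> S. P u < R u}"
  shows "(\<Sum>u\<in>S. (R u - P u)^2) \<le> 2 * (sum R A - sum P A)^2"
proof -
  have AS: "A \<subseteq> S" "finite A" using S by (auto simp: A)
  have "(\<Sum>u\<in>A. (R u - P u)^2) \<le> (\<Sum>u\<in>A. R u - P u)^2"
    using AS by (intro sum_squares_le_square_sum) (auto simp: A)
  moreover have "(\<Sum>u\<in>S - A. (P u - R u)^2) \<le> (\<Sum>u\<in>S - A. P u - R u)^2"
    using S by (intro sum_squares_le_square_sum) (auto simp: A)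
  moreover have "(\<Sum>u\<in>S - A. P u - R u) = (\<Sum>u\<in>A. R u - P u)"
    using eq sum.subset_diff[OF AS(1) S, of R] sum.subset_diff[OF AS(1) S, of P]
    by (simp add: sum_subtractf)
  ultimately show ?thesis
    using sum.subset_diff[OF AS(1) S, of "\<lambda>u. (R u - P u)^2"]
    by (simp add: power2_commute sum_subtractf)
qed

lemma sum_increase_set_bounds:
  fixes R P :: "'a \<Rightarrow> real"
  assumes S: "finite S" and P: "\<And>u. u \<in> S \<Longrightarrow> 0 < P u" and eq: "sum R S = sum P S"
    and A: "A = {u \<in> S. P u < R u}" "A \<noteq> {}"
  shows "0 < sum P A" "sum P A < sum P S"
proof -
  have AS: "A \<subseteq> S" "finite A" using S A by auto
  obtain a where a: "a \<in> A" using A by blast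
  have "P a \<le> sum P A" using a AS P by (intro member_le_sum) (auto intro: less_imp_le)
  then show "0 < sum P A" using a AS P by (smt (verit) subsetD)
  have "S - A \<noteq> {}"
  proof
    assume "S - A = {}"
    then have "sum P S < sum R S" using S a AS by (intro sum_strict_mono) (auto simp: A)
    then show False using eq by simp
  qed
  then obtain b where b: "b \<in> S - A" by blast
  have "P b \<le> sum P (S - A)" using b S P by (intro member_le_sum) (auto intro: less_imp_le)
  then show "sum P A < sum P S"
    using b P sum.subset_diff[OF AS(1) S, of P] by (smt (verit) DiffD1)
qed

text \<open>Ordentlich and Weinberger's distribution-dependent refinement of Pinsker's inequality:
  the set \<open>A = {P < R}\<close> reduces it to the binary case, and \<open>pi_set P A \<le> ps\<close> together
  with the monotonicity of phi gives a bound that is uniform in R.\<close>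
lemma refined_pinsker:
  assumes S: "finite S" and P: "\<And>u. u \<in> S \<Longrightarrow> 0 < P u" "sum P S = 1"
    and R: "\<And>u. u \<in> S \<Longrightarrow> 0 \<le> R u" "sum R S = 1"
    and ps: "\<And>A. A \<subseteq> S \<Longrightarrow> pi_set P A \<le> ps" "ps \<le> 1/2"
  shows "phi ps * (\<Sum>u\<in>S. (R u - P u)^2) \<le> 2 * kl_div S R P"
proof -
  define A where "A = {u \<in> S. P u < R u}"
  define p q where "p = sum P A" and "q = sum R A"
  have AS: "A \<subseteq> S" "finite A" using S by (auto simp: A_def)
  have compl: "sum P (S - A) = 1 - p" "sum R (S - A) = 1 - q"
    using sum.subset_diff[OF AS(1) S, of P] sum.subset_diff[OF AS(1) S, of R] P R
    by (simp_all add: p_def q_def)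
  have sq: "(\<Sum>u\<in>S. (R u - P u)^2) \<le> 2 * (q - p)^2"
    unfolding p_def q_def using S P R by (intro sum_squares_diff_le) (auto simp: A_def)
  show ?thesis
  proof (cases "A = {}")
    case True
    then have "(\<Sum>u\<in>S. (R u - P u)^2) = 0"
      using sq sum_nonneg[of S "\<lambda>u. (R u - P u)^2"] by (simp add: p_def q_def)
    moreover have "0 \<le> kl_div S R P" using S P R by (intro kl_div_nonneg) auto
    ultimately show ?thesis by simp
  next
    case False
    have p: "0 < p" "p < 1"
      using sum_increase_set_bounds[OF S P(1) _ A_def False] P R by (simp_all add: p_def)
    have q: "0 \<le> q" "q \<le> 1"
      using compl sum_nonneg[of "S - A" R] sum_nonneg[of A R] R AS by (auto simp: q_def)
    have m: "0 < min p (1 - p)" "min p (1 - p) \<le> ps"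
      using p ps(1)[OF AS(1)] by (auto simp: pi_set_def p_def)
    have "phi ps * (q - p)^2 \<le> phi (min p (1 - p)) * (q - p)^2"
      using m ps(2) by (intro mult_right_mono phi_antimono) auto
    also have "\<dots> \<le> kl_term q p + kl_term (1 - q) (1 - p)"
      using p q by (rule binary_kl_ge_phi_min)
    also have "\<dots> \<le> kl_div S R P"
      using kl_div_ge_binary[of S A P R] S AS P R compl by (simp add: p_def q_def)
    finally have "phi ps * (q - p)^2 \<le> kl_div S R P" .
    moreover have "phi ps * (\<Sum>u\<in>S. (R u - P u)^2) \<le> phi ps * (2 * (q - p)^2)"
      using sq phi_ge_two[of ps] m ps(2) by (intro mult_left_mono) auto
    ultimately show ?thesis by simp
  qed
qed

section \<open>Channels and their contraction coefficients\<close>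

locale channel =
  fixes S :: "'a set" and T :: "'b set" and W :: "'a \<Rightarrow> 'b \<Rightarrow> real" and P :: "'a \<Rightarrow> real"
  assumes finite_in: "finite S" and finite_out: "finite T"
    and W_nonneg: "\<And>u v. u \<in> S \<Longrightarrow> v \<in> T \<Longrightarrow> 0 \<le> W u v"
    and W_sum: "\<And>u. u \<in> S \<Longrightarrow> sum (W u) T = 1"
    and P_pos: "\<And>u. u \<in> S \<Longrightarrow> 0 < P u" and P_sum: "sum P S = 1"
    and out_pos: "\<And>v. v \<in> T \<Longrightarrow> 0 < chan_out S W P v"
begin

lemma chan_out_sum: "sum (chan_out S W R) T = sum R S"
proof -
  have "sum (chan_out S W R) T = (\<Sum>u\<in>S. \<Sum>v\<in>T. W u v * R u)"
    unfolding chan_out_def by (rule sum.swap)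
  also have "\<dots> = sum R S" by (simp add: sum_distrib_right[symmetric] W_sum)
  finally show ?thesis .
qed

lemma chan_out_nonneg: "(\<And>u. u \<in> S \<Longrightarrow> 0 \<le> R u) \<Longrightarrow> v \<in> T \<Longrightarrow> 0 \<le> chan_out S W R v"
  unfolding chan_out_def by (intro sum_nonneg mult_nonneg_nonneg W_nonneg) auto

lemma chan_out_affine:
  "chan_out S W (\<lambda>u. P u + t * (R u - P u)) v
    = chan_out S W P v + t * (chan_out S W R v - chan_out S W P v)"
  unfolding chan_out_def by (simp add: algebra_simps sum.distrib sum_distrib_left sum_subtractf)

lemma kl_div_data_processing:
  assumes R: "\<And>u. u \<in> S \<Longrightarrow> 0 \<le> R u"
  shows "kl_div T (chan_out S W R) (chan_out S W P) \<le> kl_div S R P"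
proof -
  have "kl_div T (chan_out S W R) (chan_out S W P) \<le> (\<Sum>v\<in>T. \<Sum>u\<in>S. W u v * kl_term (R u) (P u))"
    unfolding kl_div_eq_sum_kl_term
  proof (rule sum_mono)
    fix v assume v: "v \<in> T"
    have "kl_term (chan_out S W R v) (chan_out S W P v)
        \<le> (\<Sum>u\<in>S. kl_term (W u v * R u) (W u v * P u))"
      unfolding chan_out_def
    proof (rule log_sum_inequality[OF finite_in])
      fix u assume u: "u \<in> S"
      show "0 \<le> W u v * R u" "0 \<le> W u v * P u" using W_nonneg[OF u v] R[OF u] P_pos[OF u] by auto
      show "W u v * P u = 0 \<Longrightarrow> W u v * R u = 0" using P_pos[OF u] by simp
    qed
    also have "\<dots> = (\<Sum>u\<in>S. W u v * kl_term (R u) (P u))"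
      by (intro sum.cong refl kl_term_scale W_nonneg v)
    finally show "kl_term (chan_out S W R v) (chan_out S W P v) \<le> \<dots>" .
  qed
  also have "\<dots> = (\<Sum>u\<in>S. \<Sum>v\<in>T. W u v * kl_term (R u) (P u))" by (rule sum.swap)
  also have "\<dots> = kl_div S R P"
    by (simp add: sum_distrib_right[symmetric] W_sum kl_div_eq_sum_kl_term)
  finally show ?thesis .
qed

text \<open>Cauchy-Schwarz in the form \<open>(\<Sum> W (R - P))\<^sup>2 \<le> (\<Sum> W P) (\<Sum> W (R - P)\<^sup>2 / P)\<close>, written as
  the nonnegativity of a weighted variance.\<close>
lemma chi2_div_data_processing:
  "chi2_div T (chan_out S W R) (chan_out S W P) \<le> chi2_div S R P"
proof -
  have "chi2_div T (chan_out S W R) (chan_out S W P) \<le> (\<Sum>v\<in>T. \<Sum>u\<in>S. W u v * ((R u - P u)^2 / P u))"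
    unfolding chi2_div_def
  proof (rule sum_mono)
    fix v assume v: "v \<in> T"
    define b a where "b = chan_out S W P v" and "a = (\<Sum>u\<in>S. W u v * (R u - P u))"
    have b: "0 < b" using out_pos[OF v] by (simp add: b_def)
    have diff: "chan_out S W R v - chan_out S W P v = a"
      unfolding a_def chan_out_def by (simp add: sum_subtractf algebra_simps)
    have square: "w * p * (d/p - a/b)^2 = w * (d^2/p) - 2 * (a/b) * (w * d) + (a/b)^2 * (w * p)"
      if "p \<noteq> 0" for w p d :: real
      using that b by (simp add: field_simps power2_eq_square)
    have "0 \<le> (\<Sum>u\<in>S. W u v * P u * ((R u - P u) / P u - a / b)^2)"
      by (intro sum_nonneg mult_nonneg_nonneg W_nonneg v) (auto dest: P_pos simp: less_imp_le)
    also have "\<dots> = (\<Sum>u\<in>S. W u v * ((R u - P u)^2 / P u) - 2 * (a/b) * (W u v * (R u - P u))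
        + (a/b)^2 * (W u v * P u))"
      by (intro sum.cong refl square) (auto dest!: P_pos)
    also have "\<dots> = (\<Sum>u\<in>S. W u v * ((R u - P u)^2 / P u)) - 2 * (a/b) * a + (a/b)^2 * b"
      by (simp add: sum.distrib sum_subtractf sum_distrib_left a_def b_def chan_out_def)
    also have "\<dots> = (\<Sum>u\<in>S. W u v * ((R u - P u)^2 / P u)) - a^2 / b"
      using b by (simp add: field_simps power2_eq_square)
    finally show "(chan_out S W R v - chan_out S W P v)^2 / chan_out S W P v
        \<le> (\<Sum>u\<in>S. W u v * ((R u - P u)^2 / P u))"
      using diff by (simp add: b_def)
  qed
  also have "\<dots> = (\<Sum>u\<in>S. \<Sum>v\<in>T. W u v * ((R u - P u)^2 / P u))" by (rule sum.swap)
  also have "\<dots> = chi2_div S R P"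
    unfolding chi2_div_def
    by (intro sum.cong refl, subst sum_distrib_right[symmetric]) (simp add: W_sum)
  finally show ?thesis .
qed

lemma chi2_div_in_nonneg: "0 \<le> chi2_div S R P"
  unfolding chi2_div_def by (intro sum_nonneg divide_nonneg_pos) (auto dest: P_pos)

lemma chi2_div_out_nonneg: "0 \<le> chi2_div T (chan_out S W R) (chan_out S W P)"
  unfolding chi2_div_def by (intro sum_nonneg divide_nonneg_pos) (auto dest: out_pos)

lemma bdd_above_kl_ratios:
  "bdd_above {kl_div T (chan_out S W R) (chan_out S W P) / kl_div S R P | R.
      is_pmf S R \<and> abs_cont S R P \<and> 0 < kl_div S R P}"
  by (rule bdd_aboveI[where M=1])
    (auto simp: is_pmf_def intro!: kl_div_data_processing)

lemma bdd_above_chi2_ratios: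
  "bdd_above {chi2_div T (chan_out S W R) (chan_out S W P) / chi2_div S R P | R.
      is_pmf S R \<and> abs_cont S R P \<and> 0 < chi2_div S R P}"
  by (rule bdd_aboveI[where M=1]) (auto intro: chi2_div_data_processing)

end

lemma xlnx_second_order:
  "((\<lambda>t. ((1 + t * c) * ln (1 + t * c) - t * c) / t^2) \<longlongrightarrow> c^2 / 2) (at_right (0::real))"
proof -
  consider "c > 0" | "c < 0" | "c = 0" by linarith
  then have "((\<lambda>t. ((1 + t * c) * ln (1 + t * c) - t * c) / t^2) \<longlongrightarrow> c * c / 2) (at_right (0::real))"
    by cases (real_asymp, real_asymp, simp)
  then show ?thesis by (simp add: power2_eq_square)
qed

lemma kl_div_segment_tendsto:
  assumes S: "finite S" and p: "\<And>u. u \<in> S \<Longrightarrow> 0 < p u" and r: "\<And>u. u \<in> S \<Longrightarrow> 0 \<le> r u"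
    and sum_eq: "sum r S = sum p S"
  shows "((\<lambda>t. kl_div S (\<lambda>u. p u + t * (r u - p u)) p / t^2) \<longlongrightarrow> chi2_div S r p / 2) (at_right 0)"
proof -
  define c where "c u = (r u - p u) / p u" for u
  let ?f = "\<lambda>t. \<Sum>u\<in>S. p u * (((1 + t * c u) * ln (1 + t * c u) - t * c u) / t^2)"
  have lim: "(?f \<longlongrightarrow> (\<Sum>u\<in>S. p u * ((c u)^2 / 2))) (at_right 0)"
    by (intro tendsto_sum tendsto_mult_left xlnx_second_order)
  have limit_eq: "(\<Sum>u\<in>S. p u * ((c u)^2 / 2)) = chi2_div S r p / 2"
    unfolding chi2_div_def sum_divide_distrib
    by (intro sum.cong refl) (auto dest!: p simp: c_def power2_eq_square field_simps)
  have "\<forall>\<^sub>F t in at_right 0. ?f t = kl_div S (\<lambda>u. p u + t * (r u - p u)) p / t^2"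
    using eventually_at_right_real[OF zero_less_one]
  proof eventually_elim
    case (elim t)
    then have t: "0 < t" "t < 1" by auto
    have summand: "kl_term (p u + t * (r u - p u)) (p u)
        = p u * ((1 + t * c u) * ln (1 + t * c u) - t * c u) + t * (r u - p u)"
      if u: "u \<in> S" for u
    proof -
      have pu: "0 < p u" using p[OF u] .
      have eq: "p u + t * (r u - p u) = p u * (1 + t * c u)"
        using pu by (simp add: c_def field_simps)
      have "0 < t * r u + (1 - t) * p u" using t pu r[OF u] by (simp add: add_nonneg_pos)
      then have "0 < p u * (1 + t * c u)" using eq by (simp add: algebra_simps)
      then have "0 < 1 + t * c u" using pu by (simp add: zero_less_mult_iff)
      then have "kl_term (p u + t * (r u - p u)) (p u) = p u * (1 + t * c u) * ln (1 + t * c u)"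
        using pu unfolding kl_term_def eq by simp
      also have "\<dots> = p u * ((1 + t * c u) * ln (1 + t * c u) - t * c u) + t * (r u - p u)"
        using pu by (simp add: c_def field_simps)
      finally show ?thesis .
    qed
    have "kl_div S (\<lambda>u. p u + t * (r u - p u)) p
        = (\<Sum>u\<in>S. p u * ((1 + t * c u) * ln (1 + t * c u) - t * c u)) + t * (\<Sum>u\<in>S. r u - p u)"
      by (simp add: kl_div_eq_sum_kl_term summand sum.distrib sum_distrib_left)
    also have "(\<Sum>u\<in>S. r u - p u) = 0" using sum_eq by (simp add: sum_subtractf)
    finally show ?case by (simp add: sum_divide_distrib mult.assoc)
  qed
  from Lim_transform_eventually[OF lim this] show ?thesis by (simp only: limit_eq)
qed

lemma (in channel) abs_cont_input: "abs_cont S R P"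
  by (auto simp: abs_cont_def dest!: P_pos)

text \<open>Perturbing P towards R, both divergences shrink like half the corresponding chi-square
  divergences.\<close>
lemma (in channel) chi2_ratio_le_eta_KL:
  assumes R: "is_pmf S R" and chi2: "0 < chi2_div S R P"
  shows "chi2_div T (chan_out S W R) (chan_out S W P) / chi2_div S R P \<le> eta_KL S T P W"
proof -
  have R0: "\<And>u. u \<in> S \<Longrightarrow> 0 \<le> R u" and R1: "sum R S = 1" using R by (auto simp: is_pmf_def)
  define Rt where "Rt t u = P u + t * (R u - P u)" for t u
  define kl_in kl_out where "kl_in t = kl_div S (Rt t) P"
    and "kl_out t = kl_div T (chan_out S W (Rt t)) (chan_out S W P)" for t
  let ?ci = "chi2_div S R P" and ?co = "chi2_div T (chan_out S W R) (chan_out S W P)"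
  have lim_in: "((\<lambda>t. kl_in t / t^2) \<longlongrightarrow> ?ci / 2) (at_right 0)"
    unfolding kl_in_def Rt_def
    by (intro kl_div_segment_tendsto finite_in P_pos R0) (simp_all add: R1 P_sum)
  have lim_out: "((\<lambda>t. kl_out t / t^2) \<longlongrightarrow> ?co / 2) (at_right 0)"
    unfolding kl_out_def Rt_def chan_out_affine
    by (intro kl_div_segment_tendsto finite_out out_pos chan_out_nonneg[OF R0])
      (simp_all add: chan_out_sum R1 P_sum)
  have "((\<lambda>t. (kl_out t / t^2) / (kl_in t / t^2)) \<longlongrightarrow> (?co / 2) / (?ci / 2)) (at_right 0)"
    by (rule tendsto_divide[OF lim_out lim_in]) (use chi2 in simp)
  moreover have "\<forall>\<^sub>F t in at_right 0. (kl_out t / t^2) / (kl_in t / t^2) \<le> eta_KL S T P W"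
    using eventually_at_right_real[OF zero_less_one]
      order_tendstoD(1)[OF lim_in half_gt_zero[OF chi2]]
  proof eventually_elim
    case (elim t)
    then have t: "0 < t" "t < 1" and kl_in: "0 < kl_in t" by (auto simp: zero_less_divide_iff)
    have "\<forall>u\<in>S. 0 \<le> Rt t u"
    proof
      fix u assume u: "u \<in> S"
      have "0 \<le> t * R u + (1 - t) * P u" using t R0[OF u] P_pos[OF u] by simp
      then show "0 \<le> Rt t u" by (simp add: Rt_def algebra_simps)
    qed
    moreover have "sum (Rt t) S = 1"
      by (simp add: Rt_def sum.distrib sum_distrib_left[symmetric] sum_subtractf R1 P_sum)
    ultimately have "kl_out t / kl_in t
        \<in> {kl_div T (chan_out S W R) (chan_out S W P) / kl_div S R P | R.
        is_pmf S R \<and> abs_cont S R P \<and> 0 < kl_div S R P}"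
      using abs_cont_input kl_in unfolding kl_out_def kl_in_def is_pmf_def by blast
    then have "kl_out t / kl_in t \<le> eta_KL S T P W"
      unfolding eta_KL_def by (rule cSup_upper[OF _ bdd_above_kl_ratios])
    then show ?case using t by simp
  qed
  ultimately have "(?co / 2) / (?ci / 2) \<le> eta_KL S T P W"
    by (rule tendsto_upperbound) simp
  then show ?thesis by simp
qed

lemma (in channel) chi2_div_out_le_eta_chi2:
  assumes R: "is_pmf S R"
  shows "chi2_div T (chan_out S W R) (chan_out S W P) \<le> eta_chi2 S T P W * chi2_div S R P"
proof (cases "chi2_div S R P = 0")
  case True
  then show ?thesis using chi2_div_data_processing[of R] by simp
next
  case False
  then have chi2: "0 < chi2_div S R P" using chi2_div_in_nonneg[of R] by simp
  then have "chi2_div T (chan_out S W R) (chan_out S W P) / chi2_div S R P \<le> eta_chi2 S T P W"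
    unfolding eta_chi2_def using R abs_cont_input by (intro cSup_upper[OF _ bdd_above_chi2_ratios]) blast
  then show ?thesis using chi2 by (simp add: divide_le_eq)
qed

text \<open>Without an input letter of probability less than 1 the suprema defining the
  contraction coefficients would range over the empty set.\<close>
lemma (in channel) point_mass_witness:
  assumes u0: "u0 \<in> S" "P u0 < 1"
  defines "D \<equiv> \<lambda>u. if u = u0 then 1 else 0 :: real"
  shows "is_pmf S D" "0 < kl_div S D P" "0 < chi2_div S D P"
proof -
  show "is_pmf S D" using u0 finite_in by (simp add: is_pmf_def D_def)
  have "kl_div S D P = (\<Sum>u\<in>S. if u = u0 then - ln (P u0) else 0)"
    unfolding kl_div_def D_def by (intro sum.cong refl) (auto simp: ln_div)
  also have "\<dots> = - ln (P u0)" using u0 finite_in by simp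
  finally have "kl_div S D P = - ln (P u0)" .
  then show "0 < kl_div S D P" using u0 P_pos by simp
  have "(D u0 - P u0)^2 / P u0 \<le> chi2_div S D P"
    unfolding chi2_div_def using u0 finite_in P_pos
    by (intro member_le_sum) (auto intro: divide_nonneg_pos)
  moreover have "0 < (D u0 - P u0)^2 / P u0"
    using u0 P_pos by (intro divide_pos_pos) (auto simp: D_def)
  ultimately show "0 < chi2_div S D P" by simp
qed

lemma (in channel) eta_chi2_le_eta_KL:
  assumes "u0 \<in> S" "P u0 < 1"
  shows "eta_chi2 S T P W \<le> eta_KL S T P W"
  unfolding eta_chi2_def[of S]
  by (rule cSup_least) (use point_mass_witness[OF assms] abs_cont_input chi2_ratio_le_eta_KL in blast)+

lemma (in channel) eta_chi2_nonneg:
  assumes "u0 \<in> S" "P u0 < 1"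
  shows "0 \<le> eta_chi2 S T P W"
proof -
  define D where "D = (\<lambda>u. if u = u0 then 1 else 0 :: real)"
  have D: "is_pmf S D" "0 < chi2_div S D P"
    using point_mass_witness[OF assms] by (simp_all add: D_def)
  then have "chi2_div T (chan_out S W D) (chan_out S W P) / chi2_div S D P \<le> eta_chi2 S T P W"
    unfolding eta_chi2_def using abs_cont_input by (intro cSup_upper[OF _ bdd_above_chi2_ratios]) blast
  moreover have "0 \<le> chi2_div T (chan_out S W D) (chan_out S W P) / chi2_div S D P"
    using chi2_div_out_nonneg chi2_div_in_nonneg by (rule divide_nonneg_nonneg)
  ultimately show ?thesis by linarith
qed

lemma (in channel) eta_KL_le:
  assumes "u0 \<in> S" "P u0 < 1"
    and bound: "\<And>R. is_pmf S R \<Longrightarrow> kl_div T (chan_out S W R) (chan_out S W P) \<le> k * kl_div S R P"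
  shows "eta_KL S T P W \<le> k"
  unfolding eta_KL_def
proof (rule cSup_least)
  show "{kl_div T (chan_out S W R) (chan_out S W P) / kl_div S R P | R.
      is_pmf S R \<and> abs_cont S R P \<and> 0 < kl_div S R P} \<noteq> {}"
    using point_mass_witness[OF assms(1,2)] abs_cont_input by blast
qed (auto simp: divide_le_eq dest!: bound)

section \<open>Tensorization of the strong data processing inequality\<close>

text \<open>The strong data processing inequality for KL divergence with constant k, stated for
  unnormalised nonnegative inputs s; \<open>\<Sum>u. kl_term (s u) (sum s S * P u)\<close> is
  \<open>sum s S\<close> times the divergence of the normalisation of s from P.  The homogeneous form
  is what the chain rule produces on the conditional slices.\<close>
definition kl_sdpi :: "'a set \<Rightarrow> 'b set \<Rightarrow> ('a \<Rightarrow> 'b \<Rightarrow> real) \<Rightarrow> ('a \<Rightarrow> real) \<Rightarrow> real \<Rightarrow> bool" where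
  "kl_sdpi S T W P k \<longleftrightarrow> (\<forall>s. (\<forall>u\<in>S. 0 \<le> s u) \<longrightarrow>
     (\<Sum>v\<in>T. kl_term (chan_out S W s v) (sum s S * chan_out S W P v))
       \<le> k * (\<Sum>u\<in>S. kl_term (s u) (sum s S * P u)))"

lemma kl_sdpiD:
  "kl_sdpi S T W P k \<Longrightarrow> (\<And>u. u \<in> S \<Longrightarrow> 0 \<le> s u) \<Longrightarrow>
     (\<Sum>v\<in>T. kl_term (chan_out S W s v) (sum s S * chan_out S W P v))
       \<le> k * (\<Sum>u\<in>S. kl_term (s u) (sum s S * P u))"
  unfolding kl_sdpi_def by blast

lemma kl_term_chain_rule:
  assumes B: "finite B" and x: "\<And>b. b \<in> B \<Longrightarrow> 0 \<le> x b"
    and y: "0 < y" and z: "\<And>b. b \<in> B \<Longrightarrow> 0 < z b"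
  shows "(\<Sum>b\<in>B. kl_term (x b) (y * z b))
    = kl_term (sum x B) y + (\<Sum>b\<in>B. kl_term (x b) (sum x B * z b))"
proof (cases "sum x B = 0")
  case True
  then have "\<forall>b\<in>B. x b = 0" using sum_nonneg_eq_0_iff[OF B x] by simp
  then show ?thesis using True by (simp add: kl_term_def)
next
  case False
  then have X: "0 < sum x B" using sum_nonneg[of B x] x by simp
  have "kl_term (x b) (y * z b) = x b * ln (sum x B / y) + kl_term (x b) (sum x B * z b)"
    if b: "b \<in> B" for b
  proof (cases "x b = 0")
    case False
    then have "0 < x b" using x[OF b] by simp
    then have "ln (x b / (y * z b)) = ln (sum x B / y) + ln (x b / (sum x B * z b))"
      using X y z[OF b] by (simp add: ln_div ln_mult)
    then show ?thesis using False by (simp add: kl_term_def algebra_simps)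
  qed (simp add: kl_term_def)
  then have "(\<Sum>b\<in>B. kl_term (x b) (y * z b))
      = (\<Sum>b\<in>B. x b * ln (sum x B / y)) + (\<Sum>b\<in>B. kl_term (x b) (sum x B * z b))"
    by (simp add: sum.distrib)
  also have "(\<Sum>b\<in>B. x b * ln (sum x B / y)) = kl_term (sum x B) y"
    using False by (simp add: kl_term_def sum_distrib_right[symmetric])
  finally show ?thesis .
qed

lemma kl_term_product_chain_rule:
  assumes "finite B" "\<And>a b. a \<in> A \<Longrightarrow> b \<in> B \<Longrightarrow> 0 \<le> x a b" "0 < M"
    "\<And>a. a \<in> A \<Longrightarrow> 0 < p a" "\<And>b. b \<in> B \<Longrightarrow> 0 < q b"
  shows "(\<Sum>a\<in>A. \<Sum>b\<in>B. kl_term (x a b) (M * (p a * q b)))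
    = (\<Sum>a\<in>A. kl_term (sum (x a) B) (M * p a))
      + (\<Sum>a\<in>A. \<Sum>b\<in>B. kl_term (x a b) (sum (x a) B * q b))"
  unfolding sum.distrib[symmetric] mult.assoc[symmetric]
  using assms by (intro sum.cong refl kl_term_chain_rule mult_pos_pos) auto

text \<open>Joint convexity of the homogeneous divergence, from the log-sum inequality.\<close>
lemma kl_term_mixture_le:
  assumes A: "finite A" and w: "\<And>a. a \<in> A \<Longrightarrow> 0 \<le> w a"
    and B: "finite B" and s: "\<And>a b. a \<in> A \<Longrightarrow> b \<in> B \<Longrightarrow> 0 \<le> s a b"
    and Q: "\<And>b. b \<in> B \<Longrightarrow> 0 < Q b"
  shows "(\<Sum>b\<in>B. kl_term (\<Sum>a\<in>A. w a * s a b) ((\<Sum>a\<in>A. w a * sum (s a) B) * Q b))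
    \<le> (\<Sum>a\<in>A. w a * (\<Sum>b\<in>B. kl_term (s a b) (sum (s a) B * Q b)))"
proof -
  have "(\<Sum>b\<in>B. kl_term (\<Sum>a\<in>A. w a * s a b) ((\<Sum>a\<in>A. w a * sum (s a) B) * Q b))
      \<le> (\<Sum>b\<in>B. \<Sum>a\<in>A. kl_term (w a * s a b) (w a * (sum (s a) B * Q b)))"
  proof (rule sum_mono)
    fix b assume b: "b \<in> B"
    have "(\<Sum>a\<in>A. w a * sum (s a) B) * Q b = (\<Sum>a\<in>A. w a * (sum (s a) B * Q b))"
      by (simp add: sum_distrib_right mult.assoc)
    moreover have "kl_term (\<Sum>a\<in>A. w a * s a b) (\<Sum>a\<in>A. w a * (sum (s a) B * Q b))
        \<le> (\<Sum>a\<in>A. kl_term (w a * s a b) (w a * (sum (s a) B * Q b)))"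
    proof (rule log_sum_inequality[OF A])
      fix a assume a: "a \<in> A"
      have sum_s: "0 \<le> sum (s a) B" using s[OF a] by (simp add: sum_nonneg)
      show "0 \<le> w a * s a b" "0 \<le> w a * (sum (s a) B * Q b)"
        using w[OF a] s[OF a b] sum_s Q[OF b] by simp_all
      assume "w a * (sum (s a) B * Q b) = 0"
      then have "w a = 0 \<or> sum (s a) B = 0" using Q[OF b] by simp
      then show "w a * s a b = 0" using sum_nonneg_eq_0_iff[OF B, of "s a"] s[OF a] b by auto
    qed
    ultimately show "kl_term (\<Sum>a\<in>A. w a * s a b) ((\<Sum>a\<in>A. w a * sum (s a) B) * Q b)
        \<le> (\<Sum>a\<in>A. kl_term (w a * s a b) (w a * (sum (s a) B * Q b)))" by simp
  qed
  also have "\<dots> = (\<Sum>a\<in>A. w a * (\<Sum>b\<in>B. kl_term (s a b) (sum (s a) B * Q b)))"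
    by (subst sum.swap) (simp add: kl_term_scale w sum_distrib_left)
  finally show ?thesis .
qed

context channel
begin

lemma kl_sdpi_mixture:
  assumes sdpi: "kl_sdpi S T W P k" "0 \<le> k"
    and A: "finite A" and w: "\<And>a. a \<in> A \<Longrightarrow> 0 \<le> w a"
    and s: "\<And>a b. a \<in> A \<Longrightarrow> b \<in> S \<Longrightarrow> 0 \<le> s a b"
  shows "(\<Sum>v\<in>T. kl_term (chan_out S W (\<lambda>b. \<Sum>a\<in>A. w a * s a b) v)
            ((\<Sum>a\<in>A. w a * sum (s a) S) * chan_out S W P v))
    \<le> k * (\<Sum>a\<in>A. w a * (\<Sum>b\<in>S. kl_term (s a b) (sum (s a) S * P b)))"
proof -
  define m where "m = (\<lambda>b. \<Sum>a\<in>A. w a * s a b)"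
  have sum_m: "sum m S = (\<Sum>a\<in>A. w a * sum (s a) S)"
    unfolding m_def by (subst sum.swap) (simp add: sum_distrib_left)
  have "(\<Sum>v\<in>T. kl_term (chan_out S W m v) (sum m S * chan_out S W P v))
      \<le> k * (\<Sum>b\<in>S. kl_term (m b) (sum m S * P b))"
    using w s by (intro kl_sdpiD[OF sdpi(1)]) (auto simp: m_def intro!: sum_nonneg)
  also have "\<dots> \<le> k * (\<Sum>a\<in>A. w a * (\<Sum>b\<in>S. kl_term (s a b) (sum (s a) S * P b)))"
    unfolding sum_m unfolding m_def
    by (intro mult_left_mono sdpi(2) kl_term_mixture_le A w finite_in s P_pos)
  finally show ?thesis unfolding sum_m by (simp only: m_def)
qed

end

text \<open>Chain rule on both sides: the first coordinates are handled by the first channel,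
  and for each output c of the first channel the second coordinates form a mixture, with
  weights \<open>W1 a c\<close>, of the conditional slices \<open>s a\<close>.\<close>
lemma kl_sdpi_product:
  assumes c1: "channel S1 T1 W1 P1" and c2: "channel S2 T2 W2 P2" and k: "0 \<le> k"
    and sdpi1: "kl_sdpi S1 T1 W1 P1 k" and sdpi2: "kl_sdpi S2 T2 W2 P2 k"
    and s: "\<And>a b. a \<in> S1 \<Longrightarrow> b \<in> S2 \<Longrightarrow> 0 \<le> s a b"
  defines "M \<equiv> \<Sum>a\<in>S1. \<Sum>b\<in>S2. s a b"
  shows "(\<Sum>c\<in>T1. \<Sum>d\<in>T2. kl_term (\<Sum>a\<in>S1. \<Sum>b\<in>S2. W1 a c * W2 b d * s a b)
            (M * (chan_out S1 W1 P1 c * chan_out S2 W2 P2 d)))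
    \<le> k * (\<Sum>a\<in>S1. \<Sum>b\<in>S2. kl_term (s a b) (M * (P1 a * P2 b)))"
proof -
  interpret c1: channel S1 T1 W1 P1 by (rule c1)
  interpret c2: channel S2 T2 W2 P2 by (rule c2)
  define s1 where "s1 a = sum (s a) S2" for a
  define Q where "Q c d = (\<Sum>a\<in>S1. \<Sum>b\<in>S2. W1 a c * W2 b d * s a b)" for c d
  define Q1 where "Q1 c = chan_out S1 W1 s1 c" for c
  have s1: "\<And>a. a \<in> S1 \<Longrightarrow> 0 \<le> s1 a" unfolding s1_def by (intro sum_nonneg s)
  have M_eq: "M = sum s1 S1" by (simp add: M_def s1_def)
  have Q_mixture: "Q c d = chan_out S2 W2 (\<lambda>b. \<Sum>a\<in>S1. W1 a c * s a b) d" for c d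
    unfolding Q_def chan_out_def by (subst sum.swap) (simp add: sum_distrib_left mult_ac)
  have Q1_eq: "Q1 c = (\<Sum>a\<in>S1. W1 a c * sum (s a) S2)" for c
    by (simp add: Q1_def chan_out_def s1_def mult.commute)
  have Q_nonneg: "0 \<le> Q c d" if "c \<in> T1" "d \<in> T2" for c d
    unfolding Q_mixture using that s c1.W_nonneg
    by (intro c2.chan_out_nonneg sum_nonneg mult_nonneg_nonneg) auto
  have sum_Q: "sum (Q c) T2 = Q1 c" for c
    unfolding Q_mixture c2.chan_out_sum Q1_eq by (subst sum.swap) (simp add: sum_distrib_left)
  show ?thesis
  proof (cases "M = 0")
    case True
    then have "\<forall>a\<in>S1. \<forall>b\<in>S2. s a b = 0"
      using sum_nonneg_eq_0_iff[OF c1.finite_in s1] sum_nonneg_eq_0_iff[OF c2.finite_in s]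
      by (simp add: M_eq s1_def)
    then show ?thesis by (simp add: kl_term_def)
  next
    case False
    then have M: "0 < M" using M_eq sum_nonneg[of S1 s1] s1 by simp
    have out: "(\<Sum>c\<in>T1. \<Sum>d\<in>T2. kl_term (Q c d) (M * (chan_out S1 W1 P1 c * chan_out S2 W2 P2 d)))
        = (\<Sum>c\<in>T1. kl_term (Q1 c) (M * chan_out S1 W1 P1 c))
          + (\<Sum>c\<in>T1. \<Sum>d\<in>T2. kl_term (Q c d) (Q1 c * chan_out S2 W2 P2 d))"
      unfolding sum_Q[symmetric]
      by (rule kl_term_product_chain_rule)
        (use c2.finite_out Q_nonneg M c1.out_pos c2.out_pos in auto)
    have "(\<Sum>a\<in>S1. \<Sum>b\<in>S2. kl_term (s a b) (M * (P1 a * P2 b)))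
        = (\<Sum>a\<in>S1. kl_term (s1 a) (M * P1 a)) + (\<Sum>a\<in>S1. \<Sum>b\<in>S2. kl_term (s a b) (s1 a * P2 b))"
      unfolding s1_def
      by (rule kl_term_product_chain_rule) (use c2.finite_in s M c1.P_pos c2.P_pos in auto)
    moreover have "(\<Sum>c\<in>T1. kl_term (Q1 c) (M * chan_out S1 W1 P1 c))
        \<le> k * (\<Sum>a\<in>S1. kl_term (s1 a) (M * P1 a))"
      using kl_sdpiD[OF sdpi1 s1] by (simp add: Q1_def M_eq)
    moreover have "(\<Sum>c\<in>T1. \<Sum>d\<in>T2. kl_term (Q c d) (Q1 c * chan_out S2 W2 P2 d))
        \<le> (\<Sum>c\<in>T1. k * (\<Sum>a\<in>S1. W1 a c * (\<Sum>b\<in>S2. kl_term (s a b) (s1 a * P2 b))))"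
      unfolding Q_mixture Q1_eq s1_def
      by (intro sum_mono c2.kl_sdpi_mixture sdpi2 k c1.finite_in c1.W_nonneg s) auto
    moreover have "(\<Sum>c\<in>T1. \<Sum>a\<in>S1. W1 a c * (\<Sum>b\<in>S2. kl_term (s a b) (s1 a * P2 b)))
        = (\<Sum>a\<in>S1. \<Sum>b\<in>S2. kl_term (s a b) (s1 a * P2 b))"
      by (subst sum.swap, intro sum.cong refl, subst sum_distrib_right[symmetric])
        (simp add: c1.W_sum)
    ultimately show ?thesis
      using out unfolding Q_def by (simp add: distrib_left sum_distrib_left[symmetric])
  qed
qed

lemma chi2_div_times_pmf:
  assumes "\<And>a. a \<in> A \<Longrightarrow> 0 < p a" "\<And>b. b \<in> B \<Longrightarrow> 0 < q b" "sum q B = 1"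
  shows "(\<Sum>a\<in>A. \<Sum>b\<in>B. (r a * q b - p a * q b)^2 / (p a * q b)) = chi2_div A r p"
proof -
  have product: "(x * y - z * y)^2 / (z * y) = (x - z)^2 / z * y"
    if "0 < z" "0 < y" for x y z :: real
    using that by (simp add: field_simps power2_eq_square)
  have "(\<Sum>a\<in>A. \<Sum>b\<in>B. (r a * q b - p a * q b)^2 / (p a * q b))
      = (\<Sum>a\<in>A. \<Sum>b\<in>B. (r a - p a)^2 / p a * q b)"
    using assms by (intro sum.cong refl product) auto
  also have "\<dots> = chi2_div A r p"
    using assms(3) by (simp only: sum_distrib_left[symmetric] mult_1_right chi2_div_def)
  finally show ?thesis .
qed

lemma kl_term_le_chi2_term:
  assumes "0 \<le> a" "0 < b"
  shows "kl_term a b \<le> (a - b)^2 / b + (a - b)"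
proof (cases "a = 0")
  case True
  then show ?thesis using assms by (simp add: kl_term_def power2_eq_square)
next
  case False
  then have a: "0 < a" using assms by simp
  have "ln (a / b) \<le> a / b - 1" using a assms by (intro ln_le_minus_one) simp
  then have "a * ln (a / b) \<le> a * (a / b - 1)" using a by (simp add: mult_left_mono)
  also have "\<dots> = (a - b)^2 / b + (a - b)" using assms by (simp add: field_simps power2_eq_square)
  finally show ?thesis using False by (simp add: kl_term_def)
qed

lemma kl_div_le_chi2_div:
  assumes "finite S" "\<And>u. u \<in> S \<Longrightarrow> 0 \<le> Q u" "\<And>u. u \<in> S \<Longrightarrow> 0 < P u" "sum Q S = sum P S"
  shows "kl_div S Q P \<le> chi2_div S Q P"
proof -
  have "kl_div S Q P \<le> (\<Sum>u\<in>S. (Q u - P u)^2 / P u + (Q u - P u))"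
    unfolding kl_div_eq_sum_kl_term using assms by (intro sum_mono kl_term_le_chi2_term) auto
  also have "\<dots> = chi2_div S Q P"
    using assms(4) by (simp add: sum.distrib sum_subtractf chi2_div_def)
  finally show ?thesis .
qed

context channel
begin

lemma kl_sdpi_pmf:
  assumes "kl_sdpi S T W P k" "is_pmf S R"
  shows "kl_div T (chan_out S W R) (chan_out S W P) \<le> k * kl_div S R P"
  using kl_sdpiD[OF assms(1), of R] assms(2) by (simp add: is_pmf_def kl_div_eq_sum_kl_term)

lemma kl_sdpi_of_pmf:
  assumes bound: "\<And>R. is_pmf S R \<Longrightarrow> kl_div T (chan_out S W R) (chan_out S W P) \<le> k * kl_div S R P"
  shows "kl_sdpi S T W P k"
  unfolding kl_sdpi_def
proof (intro allI impI)
  fix s :: "'a \<Rightarrow> real" assume s: "\<forall>u\<in>S. 0 \<le> s u"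
  define M where "M = sum s S"
  have M: "0 \<le> M" unfolding M_def using s by (simp add: sum_nonneg)
  show "(\<Sum>v\<in>T. kl_term (chan_out S W s v) (sum s S * chan_out S W P v))
      \<le> k * (\<Sum>u\<in>S. kl_term (s u) (sum s S * P u))"
  proof (cases "M = 0")
    case True
    then have "\<forall>u\<in>S. s u = 0" using sum_nonneg_eq_0_iff[OF finite_in, of s] s by (simp add: M_def)
    then show ?thesis by (simp add: chan_out_def kl_term_def)
  next
    case False
    define R where "R u = s u / M" for u
    have s_eq: "s u = M * R u" for u using False by (simp add: R_def)
    have R: "is_pmf S R" using s M False unfolding is_pmf_def R_def
      by (simp add: sum_divide_distrib[symmetric] M_def[symmetric])
    have out_eq: "chan_out S W s v = M * chan_out S W R v" for v
      unfolding chan_out_def s_eq by (simp add: sum_distrib_left mult_ac)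
    have "M * kl_div T (chan_out S W R) (chan_out S W P) \<le> M * (k * kl_div S R P)"
      using bound[OF R] M by (rule mult_left_mono)
    then show ?thesis
      unfolding out_eq M_def[symmetric] s_eq using M
      by (simp add: kl_term_scale kl_div_eq_sum_kl_term sum_distrib_left mult_ac)
  qed
qed

lemma kl_div_out_le_via_chi2:
  assumes eta: "0 \<le> eta"
    and chi2: "\<And>R. is_pmf S R \<Longrightarrow> chi2_div T (chan_out S W R) (chan_out S W P) \<le> eta * chi2_div S R P"
    and pinsker: "\<And>R. is_pmf S R \<Longrightarrow> c * (\<Sum>u\<in>S. (R u - P u)^2) \<le> 2 * kl_div S R P" "0 < c"
    and m: "0 < m" "\<And>u. u \<in> S \<Longrightarrow> m \<le> P u"
    and R: "is_pmf S R"
  shows "kl_div T (chan_out S W R) (chan_out S W P) \<le> 2 * eta / (c * m) * kl_div S R P"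
proof -
  have R0: "\<And>u. u \<in> S \<Longrightarrow> 0 \<le> R u" using R by (simp add: is_pmf_def)
  have "kl_div T (chan_out S W R) (chan_out S W P) \<le> chi2_div T (chan_out S W R) (chan_out S W P)"
    using R by (intro kl_div_le_chi2_div finite_out chan_out_nonneg[OF R0] out_pos)
      (simp_all add: chan_out_sum P_sum is_pmf_def)
  also have "\<dots> \<le> eta * chi2_div S R P" by (rule chi2[OF R])
  also have "\<dots> \<le> eta * ((\<Sum>u\<in>S. (R u - P u)^2) / m)"
    unfolding chi2_div_def sum_divide_distrib
    by (intro mult_left_mono[OF _ eta] sum_mono divide_left_mono) (use m P_pos in auto)
  also have "\<dots> \<le> eta * ((2 * kl_div S R P / c) / m)"
    using pinsker(1)[OF R] pinsker(2) m(1)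
    by (intro mult_left_mono[OF _ eta] divide_right_mono) (simp_all add: le_divide_eq mult.commute)
  also have "\<dots> = 2 * eta / (c * m) * kl_div S R P" by (simp add: field_simps)
  finally show ?thesis .
qed

end

section \<open>Memoryless channels\<close>

definition cond_pmf :: "('x \<Rightarrow> 'y::finite \<Rightarrow> real) \<Rightarrow> 'x \<Rightarrow> 'y \<Rightarrow> real" where
  "cond_pmf PXY x y = PXY x y / margX PXY x"

lemma finite_seqs: "finite (seqs n :: 'a::finite list set)"
  using finite_lists_length_eq[of "UNIV :: 'a set" n] by (simp add: seqs_def)

lemma seqs_0: "seqs 0 = {[]}"
  by (auto simp: seqs_def)

lemma Cons_in_seqs_Suc [simp]: "x # xs \<in> seqs (Suc n) \<longleftrightarrow> xs \<in> seqs n"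
  by (simp add: seqs_def)

lemma sum_seqs_Suc: "sum F (seqs (Suc n)) = (\<Sum>x\<in>(UNIV :: 'a::finite set). \<Sum>xs\<in>seqs n. F (x # xs))"
proof -
  have img: "seqs (Suc n) = (\<lambda>(x, xs). x # xs) ` (UNIV \<times> seqs n)"
    by (force simp: seqs_def length_Suc_conv)
  have "inj_on (\<lambda>(x, xs). x # xs) (UNIV \<times> seqs n :: ('a \<times> 'a list) set)"
    by (auto simp: inj_on_def)
  then have "sum F (seqs (Suc n)) = (\<Sum>p\<in>UNIV \<times> seqs n. F ((\<lambda>(x, xs). x # xs) p))"
    unfolding img by (rule sum.reindex[unfolded comp_def])
  then show ?thesis by (simp add: sum.cartesian_product split_def)
qed

lemma iid_input_Nil [simp]: "iid_input PXY [] = 1"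
  by (simp add: iid_input_def)

lemma iid_channel_Nil [simp]: "iid_channel PXY [] ys = 1"
  by (simp add: iid_channel_def)

lemma iid_input_Cons: "iid_input PXY (x # xs) = margX PXY x * iid_input PXY xs"
  unfolding iid_input_def by (simp only: length_Cons prod.lessThan_Suc_shift) simp

lemma iid_channel_Cons:
  "iid_channel PXY (x # xs) (y # ys) = cond_pmf PXY x y * iid_channel PXY xs ys"
  unfolding iid_channel_def cond_pmf_def by (simp only: length_Cons prod.lessThan_Suc_shift) simp

lemma chan_out_seqs_Suc:
  fixes PXY :: "'x::finite \<Rightarrow> 'y::finite \<Rightarrow> real"
  shows "chan_out (seqs (Suc n)) (iid_channel PXY) s (y # ys)
    = (\<Sum>x\<in>UNIV. \<Sum>xs\<in>seqs n. cond_pmf PXY x y * iid_channel PXY xs ys * s (x # xs))"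
  unfolding chan_out_def by (simp add: sum_seqs_Suc iid_channel_Cons)

locale joint_pmf =
  fixes PXY :: "'x::finite \<Rightarrow> 'y::finite \<Rightarrow> real"
  assumes PXY_nonneg: "\<forall>x y. 0 \<le> PXY x y" and PXY_sum: "(\<Sum>x\<in>UNIV. \<Sum>y\<in>UNIV. PXY x y) = 1"
    and margX_pos: "\<forall>x. 0 < margX PXY x" and margY_pos: "\<forall>y. 0 < margY PXY y"
begin

lemma channel_single: "channel UNIV UNIV (cond_pmf PXY) (margX PXY)"
proof
  fix x :: 'x
  show "\<And>y. 0 \<le> cond_pmf PXY x y"
    unfolding cond_pmf_def using PXY_nonneg margX_pos by (auto intro!: divide_nonneg_pos)
  show "sum (cond_pmf PXY x) UNIV = 1"
    using margX_pos by (simp add: cond_pmf_def sum_divide_distrib[symmetric] margX_def[symmetric]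
        less_imp_neq[symmetric])
  show "0 < margX PXY x" using margX_pos by simp
next
  show "sum (margX PXY) UNIV = 1" using PXY_sum by (simp add: margX_def)
  fix y :: 'y
  have "chan_out UNIV (cond_pmf PXY) (margX PXY) y = margY PXY y"
    unfolding chan_out_def cond_pmf_def margY_def using margX_pos
    by (intro sum.cong) (auto simp: less_imp_neq[symmetric])
  then show "0 < chan_out UNIV (cond_pmf PXY) (margX PXY) y" using margY_pos by simp
qed simp_all

interpretation single: channel UNIV UNIV "cond_pmf PXY" "margX PXY"
  by (rule channel_single)

lemma iid_input_pos: "0 < iid_input PXY xs"
  unfolding iid_input_def using margX_pos by (intro prod_pos) auto

lemma sum_iid_input: "sum (iid_input PXY) (seqs n) = 1"
proof (induction n)
  case (Suc n)
  have "sum (iid_input PXY) (seqs (Suc n)) = (\<Sum>x\<in>UNIV. margX PXY x * sum (iid_input PXY) (seqs n))"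
    by (simp add: sum_seqs_Suc iid_input_Cons sum_distrib_left)
  then show ?case using Suc single.P_sum by simp
qed (simp add: seqs_0)

lemma sum_iid_channel: "xs \<in> seqs n \<Longrightarrow> sum (iid_channel PXY xs) (seqs n) = 1"
proof (induction n arbitrary: xs)
  case (Suc n)
  then obtain x xs' where xs: "xs = x # xs'" and xs': "xs' \<in> seqs n"
    by (cases xs) (auto simp: seqs_def)
  have "sum (iid_channel PXY xs) (seqs (Suc n))
      = (\<Sum>y\<in>UNIV. cond_pmf PXY x y * sum (iid_channel PXY xs') (seqs n))"
    by (simp add: xs sum_seqs_Suc iid_channel_Cons sum_distrib_left)
  then show ?case using Suc.IH[OF xs'] single.W_sum by simp
qed (simp add: seqs_0)

lemma chan_out_iid_input_Cons:
  "chan_out (seqs (Suc n)) (iid_channel PXY) (iid_input PXY) (y # ys)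
    = chan_out UNIV (cond_pmf PXY) (margX PXY) y
      * chan_out (seqs n) (iid_channel PXY) (iid_input PXY) ys"
  unfolding chan_out_seqs_Suc iid_input_Cons unfolding chan_out_def sum_product
  by (simp add: mult_ac)

lemma chan_out_iid_input_pos:
  "ys \<in> seqs n \<Longrightarrow> 0 < chan_out (seqs n) (iid_channel PXY) (iid_input PXY) ys"
proof (induction n arbitrary: ys)
  case (Suc n)
  then obtain y ys' where "ys = y # ys'" "ys' \<in> seqs n" by (cases ys) (auto simp: seqs_def)
  with Suc.IH show ?case by (simp add: chan_out_iid_input_Cons single.out_pos)
qed (simp add: seqs_0 chan_out_def)

lemma channel_iid: "channel (seqs n) (seqs n) (iid_channel PXY) (iid_input PXY)"
  by unfold_locales (use finite_seqs iid_input_pos sum_iid_input sum_iid_channel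
      chan_out_iid_input_pos PXY_nonneg margX_pos in
      \<open>auto simp: iid_channel_def intro!: prod_nonneg divide_nonneg_pos\<close>)

lemma kl_sdpi_iid:
  assumes "kl_sdpi UNIV UNIV (cond_pmf PXY) (margX PXY) k" "0 \<le> k"
  shows "kl_sdpi (seqs n) (seqs n) (iid_channel PXY) (iid_input PXY) k"
proof (induction n)
  case 0
  show ?case by (simp add: kl_sdpi_def seqs_0 chan_out_def)
next
  case (Suc n)
  show ?case unfolding kl_sdpi_def
  proof (intro allI impI)
    fix s :: "'x list \<Rightarrow> real"
    assume "\<forall>u\<in>seqs (Suc n). 0 \<le> s u"
    then have "\<And>x xs. x \<in> UNIV \<Longrightarrow> xs \<in> seqs n \<Longrightarrow> 0 \<le> s (x # xs)" by simp
    from kl_sdpi_product[OF channel_single channel_iid assms(2) assms(1) Suc,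
        where s="\<lambda>x xs. s (x # xs)", OF this]
    show "(\<Sum>v\<in>seqs (Suc n). kl_term (chan_out (seqs (Suc n)) (iid_channel PXY) s v)
          (sum s (seqs (Suc n)) * chan_out (seqs (Suc n)) (iid_channel PXY) (iid_input PXY) v))
        \<le> k * (\<Sum>u\<in>seqs (Suc n). kl_term (s u) (sum s (seqs (Suc n)) * iid_input PXY u))"
      unfolding sum_seqs_Suc chan_out_iid_input_Cons unfolding chan_out_seqs_Suc iid_input_Cons .
  qed
qed

text \<open>Input \<open>R \<otimes> P\<^sub>X\<^sup>m\<close> on \<open>m + 1\<close> letters reproduces the single-letter chi-square divergences,
  both at the input and at the output.\<close>
lemma chi2_div_single_le_eta_chi2_iid:
  assumes R: "is_pmf UNIV R"
  shows "chi2_div UNIV (chan_out UNIV (cond_pmf PXY) R) (chan_out UNIV (cond_pmf PXY) (margX PXY))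
    \<le> eta_chi2 (seqs (Suc m)) (seqs (Suc m)) (iid_input PXY) (iid_channel PXY)
      * chi2_div UNIV R (margX PXY)"
proof -
  interpret iid: channel "seqs (Suc m)" "seqs (Suc m)" "iid_channel PXY" "iid_input PXY"
    by (rule channel_iid)
  interpret iid_m: channel "seqs m" "seqs m" "iid_channel PXY" "iid_input PXY"
    by (rule channel_iid)
  define R' where "R' zs = R (hd zs) * iid_input PXY (tl zs)" for zs
  have R'_Cons: "R' (x # xs) = R x * iid_input PXY xs" for x xs by (simp add: R'_def)
  have R1: "sum R UNIV = 1" and R0: "\<And>x. 0 \<le> R x" using R by (auto simp: is_pmf_def)
  have "is_pmf (seqs (Suc m)) R'"
    using R0 iid_input_pos R1 unfolding is_pmf_def
    by (simp add: R'_def less_imp_le sum_seqs_Suc sum_distrib_left[symmetric] sum_iid_input)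
  then have bound: "chi2_div (seqs (Suc m)) (chan_out (seqs (Suc m)) (iid_channel PXY) R')
        (chan_out (seqs (Suc m)) (iid_channel PXY) (iid_input PXY))
      \<le> eta_chi2 (seqs (Suc m)) (seqs (Suc m)) (iid_input PXY) (iid_channel PXY)
        * chi2_div (seqs (Suc m)) R' (iid_input PXY)"
    by (rule iid.chi2_div_out_le_eta_chi2)
  have in_eq: "chi2_div (seqs (Suc m)) R' (iid_input PXY) = chi2_div UNIV R (margX PXY)"
    unfolding chi2_div_def[of "seqs (Suc m)"] sum_seqs_Suc R'_Cons iid_input_Cons
    using margX_pos iid_input_pos sum_iid_input by (intro chi2_div_times_pmf) auto
  have out_Cons: "chan_out (seqs (Suc m)) (iid_channel PXY) R' (y # ys)
      = chan_out UNIV (cond_pmf PXY) R y * chan_out (seqs m) (iid_channel PXY) (iid_input PXY) ys"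
    for y ys
    unfolding chan_out_seqs_Suc R'_Cons unfolding chan_out_def sum_product by (simp add: mult_ac)
  have out_eq: "chi2_div (seqs (Suc m)) (chan_out (seqs (Suc m)) (iid_channel PXY) R')
      (chan_out (seqs (Suc m)) (iid_channel PXY) (iid_input PXY))
    = chi2_div UNIV (chan_out UNIV (cond_pmf PXY) R) (chan_out UNIV (cond_pmf PXY) (margX PXY))"
    unfolding chi2_div_def[of "seqs (Suc m)"] sum_seqs_Suc out_Cons chan_out_iid_input_Cons
    using single.out_pos chan_out_iid_input_pos iid_m.chan_out_sum sum_iid_input
    by (intro chi2_div_times_pmf) auto
  show ?thesis using bound in_eq out_eq by simp
qed

lemma margX_less_one:
  assumes "2 \<le> card (UNIV :: 'x set)"
  shows "margX PXY x < 1"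
proof -
  have "UNIV \<noteq> {x}"
  proof
    assume UNIV: "UNIV = {x}"
    have "card (UNIV :: 'x set) = 1" by (subst UNIV) simp
    then show False using assms by simp
  qed
  then obtain x' where x': "x' \<noteq> x" by blast
  have "sum (margX PXY) {x, x'} \<le> sum (margX PXY) UNIV"
    using margX_pos by (intro sum_mono2) (auto intro: less_imp_le)
  then have "margX PXY x + margX PXY x' \<le> 1" using x' single.P_sum by simp
  then show ?thesis using margX_pos by (smt (verit))
qed

lemma iid_input_replicate_less_one:
  assumes "2 \<le> card (UNIV :: 'x set)" "0 < n"
  shows "iid_input PXY (replicate n x) < 1"
proof -
  have "margX PXY x ^ n < 1"
    using margX_less_one[OF assms(1), of x] margX_pos assms(2)
    by (subst power_less_one_iff) (auto intro: less_imp_le)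
  then show ?thesis by (simp add: iid_input_def)
qed

lemma replicate_in_seqs: "replicate n x \<in> seqs n"
  by (simp add: seqs_def)

lemma Max_pi_set_bounds:
  assumes "2 \<le> card (UNIV :: 'x set)"
  defines "ps \<equiv> Max {pi_set (margX PXY) A | A. A \<subseteq> UNIV}"
  shows "0 < ps" "ps \<le> 1/2" "\<And>A. pi_set (margX PXY) A \<le> ps" "2 \<le> phi ps"
proof -
  have "{pi_set (margX PXY) A | A. A \<subseteq> UNIV} = pi_set (margX PXY) ` UNIV" by auto
  then have fin: "finite {pi_set (margX PXY) A | A. A \<subseteq> UNIV}" by simp
  show le_ps: "\<And>A. pi_set (margX PXY) A \<le> ps" unfolding ps_def by (rule Max_ge[OF fin]) blast
  have "0 < pi_set (margX PXY) {undefined}"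
    using margX_less_one[OF assms(1), of undefined] margX_pos by (simp add: pi_set_def)
  then show ps_pos: "0 < ps" using le_ps by (rule less_le_trans)
  have "ps \<in> {pi_set (margX PXY) A | A. A \<subseteq> UNIV}" unfolding ps_def by (rule Max_in[OF fin]) blast
  then show ps_half: "ps \<le> 1/2" by (auto simp: pi_set_def min_def)
  show "2 \<le> phi ps" using ps_pos ps_half by (rule phi_ge_two)
qed

lemma Min_margX_pos: "0 < Min (range (margX PXY))"
  using margX_pos Min_in[of "range (margX PXY)"] by auto

lemma Min_margX_le: "Min (range (margX PXY)) \<le> margX PXY x"
  by (rule Min_le) auto

lemma kl_sdpi_single:
  fixes m :: nat
  assumes card: "2 \<le> card (UNIV :: 'x set)"
  defines "eta \<equiv> eta_chi2 (seqs (Suc m)) (seqs (Suc m)) (iid_input PXY) (iid_channel PXY)"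
    and "ps \<equiv> Max {pi_set (margX PXY) A | A. A \<subseteq> UNIV}"
    and "m0 \<equiv> Min (range (margX PXY))"
  shows "kl_sdpi UNIV UNIV (cond_pmf PXY) (margX PXY) (2 * eta / (phi ps * m0))"
proof (rule single.kl_sdpi_of_pmf, rule single.kl_div_out_le_via_chi2)
  interpret iid: channel "seqs (Suc m)" "seqs (Suc m)" "iid_channel PXY" "iid_input PXY"
    by (rule channel_iid)
  show "0 \<le> eta" unfolding eta_def
    by (rule iid.eta_chi2_nonneg[OF replicate_in_seqs iid_input_replicate_less_one[OF card]]) simp
  show "chi2_div UNIV (chan_out UNIV (cond_pmf PXY) R) (chan_out UNIV (cond_pmf PXY) (margX PXY))
      \<le> eta * chi2_div UNIV R (margX PXY)" if "is_pmf UNIV R" for R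
    unfolding eta_def using that by (rule chi2_div_single_le_eta_chi2_iid)
  show "phi ps * (\<Sum>u\<in>UNIV. (R u - margX PXY u)^2) \<le> 2 * kl_div UNIV R (margX PXY)"
    if "is_pmf UNIV R" for R
    using that Max_pi_set_bounds[OF card] single.P_pos single.P_sum
    by (intro refined_pinsker) (auto simp: ps_def is_pmf_def)
  show "0 < phi ps" using Max_pi_set_bounds(4)[OF card] by (simp add: ps_def)
  show "0 < m0" "\<And>x. m0 \<le> margX PXY x"
    unfolding m0_def by (rule Min_margX_pos, rule Min_margX_le)
qed

end

theorem corollary2:
  fixes PXY :: "'x::finite \<Rightarrow> 'y::finite \<Rightarrow> real" and n :: nat
  assumes "2 \<le> card (UNIV :: 'x set)" and "2 \<le> card (UNIV :: 'y set)"
    and "\<forall>x y. 0 \<le> PXY x y" and "(\<Sum>x\<in>UNIV. \<Sum>y\<in>UNIV. PXY x y) = 1"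
    and "\<forall>x. 0 < margX PXY x" and "\<forall>y. 0 < margY PXY y"
    and "1 \<le> n"
  shows "eta_chi2 (seqs n) (seqs n) (iid_input PXY) (iid_channel PXY)
           \<le> eta_KL (seqs n) (seqs n) (iid_input PXY) (iid_channel PXY)
       \<and> eta_KL (seqs n) (seqs n) (iid_input PXY) (iid_channel PXY)
           \<le> 2 * eta_chi2 (seqs n) (seqs n) (iid_input PXY) (iid_channel PXY)
             / (phi (Max {pi_set (margX PXY) A | A. A \<subseteq> UNIV}) * Min (range (margX PXY)))"
proof -
  interpret joint_pmf PXY using assms(3-6) by unfold_locales
  interpret iid: channel "seqs n" "seqs n" "iid_channel PXY" "iid_input PXY" by (rule channel_iid)
  obtain m where n: "n = Suc m" using assms(7) by (cases n) auto
  let ?xs = "replicate n undefined"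
  have xs: "?xs \<in> seqs n" "iid_input PXY ?xs < 1"
    using replicate_in_seqs iid_input_replicate_less_one[OF assms(1)] assms(7) by simp_all
  let ?k = "2 * eta_chi2 (seqs n) (seqs n) (iid_input PXY) (iid_channel PXY)
             / (phi (Max {pi_set (margX PXY) A | A. A \<subseteq> UNIV}) * Min (range (margX PXY)))"
  have "kl_sdpi UNIV UNIV (cond_pmf PXY) (margX PXY) ?k"
    unfolding n by (rule kl_sdpi_single[OF assms(1)])
  moreover have "0 \<le> ?k"
    using iid.eta_chi2_nonneg[OF xs] Max_pi_set_bounds(4)[OF assms(1)] Min_margX_pos
    by (auto intro!: divide_nonneg_pos mult_pos_pos)
  ultimately have "kl_sdpi (seqs n) (seqs n) (iid_channel PXY) (iid_input PXY) ?k"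
    by (rule kl_sdpi_iid)
  then have "eta_KL (seqs n) (seqs n) (iid_input PXY) (iid_channel PXY) \<le> ?k"
    using xs by (intro iid.eta_KL_le iid.kl_sdpi_pmf)
  then show ?thesis using iid.eta_chi2_le_eta_KL[OF xs] by simp
qed

end
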